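(* Let $d\ge1$ and let $p,q,r\in(1,\infty)$ satisfy $p^{-1}+q^{-1}+r^{-1}=2$, and let $r'=r/(r-1)$. There exist $C<\infty$ and $\gamma>0$, depending on $(p,q,r)$, such that for any Lebesgue measurable sets $E,E'\subset\mathbb{R}^d$ with positive and finite Lebesgue measures, $$\|\mathbf{1}_E*\mathbf{1}_{E'}\|_{r'}\le C\min\Big(\frac{|E|}{|E'|},\frac{|E'|}{|E|}\Big)^\gamma |E|^{1/p}|E'|^{1/q}.$$
   Context: $\mathbf{1}_E$ denotes the indicator function of $E$, $|E|$ its Lebesgue measure, $*$ convolution on $\mathbb{R}^d$, and $\|\cdot\|_{s}$ the $L^s(\mathbb{R}^d)$ norm. *)

theory Defs
  imports "HOL-Analysis.Analysis"
begin

definition conv :: "('a::euclidean_space \<Rightarrow> real) \<Rightarrow> ('a \<Rightarrow> real) \<Rightarrow> 'a \<Rightarrow> real" where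
  "conv f g x = (LINT y|lebesgue. f y * g (x - y))"

text \<open>L^s norm, as an extended nonnegative real (so that infinite norms are not hidden).\<close>
definition Lp_norm :: "real \<Rightarrow> ('a::euclidean_space \<Rightarrow> real) \<Rightarrow> ennreal" where
  "Lp_norm s f = ennreal ((enn2real (\<integral>\<^sup>+ x. ennreal (\<bar>f x\<bar> powr s) \<partial>lebesgue)) powr (1 / s))
     + (if (\<integral>\<^sup>+ x. ennreal (\<bar>f x\<bar> powr s) \<partial>lebesgue) = \<infinity> then \<infinity> else 0)"

end

theory Submission
  imports Defs
begin

text \<open>Write a = |E|, b = |E'| and f = 1_E * 1_E'. Pointwise 0 \<le> f \<le> min a b, and the integral
  of f is a b by Tonelli and translation invariance; so f^r' \<le> (min a b)^(r'-1) f gives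
  \<parallel>f\<parallel>_r' \<le> (min a b)^(1/r) (a b)^(1/r'). For a \<le> b this is a b^(1/r'), and since
  1/p + 1/q = 1 + 1/r' it is at most (a/b)^\<gamma> a^(1/p) b^(1/q) for C = 1 and
  \<gamma> = min (1 - 1/p) (1 - 1/q) > 0.\<close>

lemma measurable_convolution_integrand:
  fixes f g :: "'a::euclidean_space \<Rightarrow> ennreal"
  assumes "f \<in> borel_measurable borel" "g \<in> borel_measurable borel"
  shows "(\<lambda>(x, y). f y * g (x - y)) \<in> borel_measurable (lborel \<Otimes>\<^sub>M (lborel :: 'a measure))"
  using assms by measurable

lemma nn_integral_lborel_translate:
  fixes g :: "'a::euclidean_space \<Rightarrow> ennreal"
  assumes "g \<in> borel_measurable borel"
  shows "(\<integral>\<^sup>+x. g (x - y) \<partial>lborel) = integral\<^sup>N lborel g"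
proof -
  have "(\<integral>\<^sup>+x. g (x - y) \<partial>lborel) = (\<integral>\<^sup>+x. g x \<partial>distr lborel borel ((+) (- y)))"
    using assms by (subst nn_integral_distr) (auto simp: algebra_simps)
  then show ?thesis
    by (simp add: lborel_distr_plus)
qed

lemma lborel_distr_reflect:
  "distr lborel borel (\<lambda>y. x - y) = (lborel :: 'a::euclidean_space measure)"
proof -
  have "lborel
      = density (distr lborel borel (\<lambda>y. x + (-1::real) *\<^sub>R y)) (\<lambda>_. \<bar>-1::real\<bar> ^ DIM('a))"
    by (rule lborel_affine) simp
  then show ?thesis
    by (simp add: density_1)
qed

lemma nn_integral_lborel_reflect:
  fixes g :: "'a::euclidean_space \<Rightarrow> ennreal"
  assumes "g \<in> borel_measurable borel"
  shows "(\<integral>\<^sup>+y. g (x - y) \<partial>lborel) = integral\<^sup>N lborel g"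
proof -
  have "(\<integral>\<^sup>+y. g (x - y) \<partial>lborel) = (\<integral>\<^sup>+y. g y \<partial>distr lborel borel (\<lambda>y. x - y))"
    using assms by (subst nn_integral_distr) auto
  then show ?thesis
    by (simp add: lborel_distr_reflect)
qed

lemma nn_integral_convolution:
  fixes f g :: "'a::euclidean_space \<Rightarrow> ennreal"
  assumes f: "f \<in> borel_measurable borel" and g: "g \<in> borel_measurable borel"
  shows "(\<integral>\<^sup>+x. \<integral>\<^sup>+y. f y * g (x - y) \<partial>lborel \<partial>lborel)
    = integral\<^sup>N lborel f * integral\<^sup>N lborel g"
proof -
  have "(\<integral>\<^sup>+x. \<integral>\<^sup>+y. f y * g (x - y) \<partial>lborel \<partial>lborel)
      = (\<integral>\<^sup>+y. \<integral>\<^sup>+x. f y * g (x - y) \<partial>lborel \<partial>lborel)"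
    using lborel_pair.Fubini'[OF measurable_convolution_integrand[OF f g]] by simp
  also have "\<dots> = (\<integral>\<^sup>+y. f y * integral\<^sup>N lborel g \<partial>lborel)"
    using g by (intro nn_integral_cong) (simp add: nn_integral_cmult nn_integral_lborel_translate)
  also have "\<dots> = integral\<^sup>N lborel f * integral\<^sup>N lborel g"
    using f by (simp add: nn_integral_multc)
  finally show ?thesis .
qed

lemma borel_measurable_nn_integral_convolution:
  fixes f g :: "'a::euclidean_space \<Rightarrow> ennreal"
  assumes "f \<in> borel_measurable borel" "g \<in> borel_measurable borel"
  shows "(\<lambda>x. \<integral>\<^sup>+y. f y * g (x - y) \<partial>lborel) \<in> borel_measurable lborel"
  using lborel.borel_measurable_nn_integral_fst[OF measurable_convolution_integrand[OF assms]] by simp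

lemma ennreal_conv_indicator_le:
  fixes E E' B B' :: "'a::euclidean_space set"
  assumes "E \<subseteq> B" "E' \<subseteq> B'"
  shows "ennreal (conv (indicator E) (indicator E') x)
    \<le> (\<integral>\<^sup>+y. indicator B y * indicator B' (x - y) \<partial>lborel)"
proof -
  let ?k = "\<lambda>y. indicator E y * indicator E' (x - y) :: real"
  have "ennreal (conv (indicator E) (indicator E') x) \<le> (\<integral>\<^sup>+y. ennreal (?k y) \<partial>lebesgue)"
  proof (cases "integrable lebesgue ?k")
    case True
    then show ?thesis
      unfolding conv_def by (subst nn_integral_eq_integral) auto
  next
    case False
    then show ?thesis
      unfolding conv_def by (simp add: not_integrable_integral_eq)
  qed
  also have "\<dots> = (\<integral>\<^sup>+y. ennreal (?k y) \<partial>lborel)"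
    by (rule nn_integral_completion)
  also have "\<dots> \<le> (\<integral>\<^sup>+y. indicator B y * indicator B' (x - y) \<partial>lborel)"
    using assms by (intro nn_integral_mono) (auto simp: indicator_def)
  finally show ?thesis .
qed

lemma conv_indicator_nonneg: "0 \<le> conv (indicator E) (indicator E') x"
  unfolding conv_def by (rule integral_nonneg_AE) auto

text \<open>The Lebesgue sets are enlarged to Borel hulls of the same measure, so that Tonelli applies
  on \<open>lborel \<Otimes>\<^sub>M lborel\<close>.\<close>

lemma conv_indicator_majorant:
  fixes E E' :: "'a::euclidean_space set"
  assumes E: "E \<in> sets lebesgue" and E': "E' \<in> sets lebesgue"
  obtains h where "h \<in> borel_measurable lebesgue"
    and "\<And>x. ennreal (conv (indicator E) (indicator E') x) \<le> h x"
    and "\<And>x. h x \<le> emeasure lebesgue E" and "\<And>x. h x \<le> emeasure lebesgue E'"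
    and "integral\<^sup>N lebesgue h = emeasure lebesgue E * emeasure lebesgue E'"
proof -
  obtain B where B: "E \<subseteq> B" "B \<in> sets borel" "emeasure lebesgue E = emeasure lborel B"
    using completion_upper[OF E] by (metis sets_lborel)
  obtain B' where B': "E' \<subseteq> B'" "B' \<in> sets borel" "emeasure lebesgue E' = emeasure lborel B'"
    using completion_upper[OF E'] by (metis sets_lborel)
  define h where "h x = (\<integral>\<^sup>+y. indicator B y * indicator B' (x - y) \<partial>lborel)" for x
  show ?thesis
  proof
    show "h \<in> borel_measurable lebesgue"
      unfolding h_def using B B'
      by (intro measurable_completion borel_measurable_nn_integral_convolution) simp_all
    show "ennreal (conv (indicator E) (indicator E') x) \<le> h x" for x
      unfolding h_def using B(1) B'(1) by (rule ennreal_conv_indicator_le)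
    show "h x \<le> emeasure lebesgue E" for x
    proof -
      have "h x \<le> (\<integral>\<^sup>+y. indicator B y \<partial>lborel)"
        unfolding h_def by (intro nn_integral_mono) (auto simp: indicator_def)
      then show ?thesis
        using B by simp
    qed
    show "h x \<le> emeasure lebesgue E'" for x
    proof -
      have "h x \<le> (\<integral>\<^sup>+y. indicator B' (x - y) \<partial>lborel)"
        unfolding h_def by (intro nn_integral_mono) (auto simp: indicator_def)
      then show ?thesis
        using B' by (simp add: nn_integral_lborel_reflect)
    qed
    show "integral\<^sup>N lebesgue h = emeasure lebesgue E * emeasure lebesgue E'"
      unfolding h_def nn_integral_completion using B B' by (simp add: nn_integral_convolution)
  qed
qed

text \<open>Since \<open>f\<close> is not assumed measurable, its \<open>L\<^sup>1\<close> norm is controlled through a measurable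
  majorant \<open>h\<close>.\<close>

lemma Lp_norm_le_interpolation:
  fixes f :: "'a::euclidean_space \<Rightarrow> real" and h :: "'a \<Rightarrow> ennreal"
  assumes "1 \<le> s" and f_nonneg: "\<And>x. 0 \<le> f x" and f_le: "\<And>x. f x \<le> m"
    and f_le_h: "\<And>x. ennreal (f x) \<le> h x"
    and h: "h \<in> borel_measurable lebesgue" "integral\<^sup>N lebesgue h \<le> ennreal I" and "0 \<le> I"
  shows "Lp_norm s f \<le> ennreal (m powr (1 - 1 / s) * I powr (1 / s))"
proof -
  have "0 \<le> m"
    using f_nonneg f_le order_trans by blast
  have pointwise: "\<bar>f x\<bar> powr s \<le> m powr (s - 1) * f x" for x
  proof (cases "f x = 0")
    case False
    then have "0 < f x"
      using f_nonneg[of x] by simp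
    then have "\<bar>f x\<bar> powr s = f x powr (s - 1) * f x"
      using powr_add[of "f x" "s - 1" 1] by simp
    also have "\<dots> \<le> m powr (s - 1) * f x"
      using \<open>0 < f x\<close> f_le[of x] \<open>1 \<le> s\<close> by (intro mult_right_mono powr_mono2) auto
    finally show ?thesis .
  qed (use \<open>1 \<le> s\<close> in simp)
  define J where "J = (\<integral>\<^sup>+x. ennreal (\<bar>f x\<bar> powr s) \<partial>lebesgue)"
  have "J \<le> (\<integral>\<^sup>+x. ennreal (m powr (s - 1)) * h x \<partial>lebesgue)"
  proof (unfold J_def, intro nn_integral_mono)
    fix x
    have "ennreal (\<bar>f x\<bar> powr s) \<le> ennreal (m powr (s - 1)) * ennreal (f x)"
      using pointwise[of x] f_nonneg[of x] by (simp add: ennreal_mult[symmetric] ennreal_leI)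
    also have "\<dots> \<le> ennreal (m powr (s - 1)) * h x"
      using f_le_h by (rule mult_left_mono) simp
    finally show "ennreal (\<bar>f x\<bar> powr s) \<le> ennreal (m powr (s - 1)) * h x" .
  qed
  also have "\<dots> \<le> ennreal (m powr (s - 1)) * ennreal I"
    using h by (simp add: nn_integral_cmult mult_left_mono)
  also have "\<dots> = ennreal (m powr (s - 1) * I)"
    using \<open>0 \<le> I\<close> by (simp add: ennreal_mult)
  finally have J_le: "J \<le> ennreal (m powr (s - 1) * I)" .
  then have "Lp_norm s f = ennreal (enn2real J powr (1 / s))"
    unfolding Lp_norm_def J_def[symmetric] by (auto simp: top_unique)
  also have "\<dots> \<le> ennreal ((m powr (s - 1) * I) powr (1 / s))"
    using J_le \<open>1 \<le> s\<close> \<open>0 \<le> I\<close> by (intro ennreal_leI powr_mono2 enn2real_leI) auto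
  also have "(m powr (s - 1) * I) powr (1 / s) = m powr (1 - 1 / s) * I powr (1 / s)"
    using \<open>0 \<le> m\<close> \<open>0 \<le> I\<close> \<open>1 \<le> s\<close> by (simp add: powr_mult powr_powr diff_divide_distrib)
  finally show ?thesis .
qed

lemma mult_powr_le_ratio_powr:
  fixes a b t u v g :: real
  assumes "0 < a" "a \<le> b" "u + v = 1 + t" "g \<le> 1 - u"
  shows "a * b powr t \<le> (a / b) powr g * a powr u * b powr v"
proof -
  have "0 < b"
    using assms by linarith
  have "ln a \<le> ln b"
    using assms by simp
  then have "0 \<le> (1 - u - g) * (ln b - ln a)"
    using assms by (intro mult_nonneg_nonneg) auto
  also have "(1 - u - g) * (ln b - ln a)
      = (g * (ln a - ln b) + u * ln a + v * ln b) - (ln a + t * ln b)"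
  proof -
    have v: "v = 1 + t - u"
      using assms(3) by linarith
    show ?thesis
      unfolding v by (simp add: algebra_simps)
  qed
  also have "\<dots> = ln ((a / b) powr g * a powr u * b powr v) - ln (a * b powr t)"
    using \<open>0 < a\<close> \<open>0 < b\<close> by (simp add: ln_mult ln_div ln_powr)
  finally show ?thesis
    using \<open>0 < a\<close> \<open>0 < b\<close> by simp
qed

lemma min_powr_mult_powr_le:
  fixes a b t u v g :: real
  assumes "0 < a" "0 < b" "u + v = 1 + t" "g \<le> 1 - u" "g \<le> 1 - v"
  shows "min a b powr (1 - t) * (a * b) powr t
    \<le> min (a / b) (b / a) powr g * a powr u * b powr v"
proof (cases "a \<le> b")
  case True
  have "min a b powr (1 - t) * (a * b) powr t = a * b powr t"
    using True \<open>0 < a\<close> \<open>0 < b\<close> by (simp add: powr_mult powr_add[symmetric])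
  moreover have "min (a / b) (b / a) = a / b"
  proof -
    have "a / b \<le> 1" "1 \<le> b / a"
      using True \<open>0 < a\<close> \<open>0 < b\<close> by auto
    then show ?thesis
      by (auto simp: min_def)
  qed
  ultimately show ?thesis
    using True assms by (simp add: mult_powr_le_ratio_powr)
next
  case False
  have "min a b powr (1 - t) * (a * b) powr t = b * a powr t"
    using False \<open>0 < a\<close> \<open>0 < b\<close> by (simp add: powr_mult powr_add[symmetric])
  moreover have "min (a / b) (b / a) = b / a"
  proof -
    have "b / a \<le> 1" "1 \<le> a / b"
      using False \<open>0 < a\<close> \<open>0 < b\<close> by auto
    then show ?thesis
      by (auto simp: min_def)
  qed
  moreover have "b * a powr t \<le> (b / a) powr g * b powr v * a powr u"
    using False assms by (intro mult_powr_le_ratio_powr) auto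
  ultimately show ?thesis
    by (simp add: mult_ac)
qed

lemma Lp_norm_conv_indicator_le:
  fixes E E' :: "'a::euclidean_space set"
  assumes "1 \<le> s"
    and E: "E \<in> sets lebesgue" "emeasure lebesgue E < \<infinity>"
    and E': "E' \<in> sets lebesgue" "emeasure lebesgue E' < \<infinity>"
  shows "Lp_norm s (conv (indicator E) (indicator E'))
    \<le> ennreal (min (measure lebesgue E) (measure lebesgue E') powr (1 - 1 / s)
               * (measure lebesgue E * measure lebesgue E') powr (1 / s))"
proof -
  have a: "emeasure lebesgue E = ennreal (measure lebesgue E)"
    using E(2) unfolding infinity_ennreal_def less_top[symmetric] by (rule emeasure_eq_ennreal_measure)
  have b: "emeasure lebesgue E' = ennreal (measure lebesgue E')"
    using E'(2) unfolding infinity_ennreal_def less_top[symmetric] by (rule emeasure_eq_ennreal_measure)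
  obtain h where h: "h \<in> borel_measurable lebesgue"
    and conv_le_h: "\<And>x. ennreal (conv (indicator E) (indicator E') x) \<le> h x"
    and h_le: "\<And>x. h x \<le> emeasure lebesgue E" "\<And>x. h x \<le> emeasure lebesgue E'"
    and h_integral: "integral\<^sup>N lebesgue h = emeasure lebesgue E * emeasure lebesgue E'"
    using conv_indicator_majorant[OF E(1) E'(1)] by metis
  have "conv (indicator E) (indicator E') x \<le> min (measure lebesgue E) (measure lebesgue E')" for x
  proof -
    have "ennreal (conv (indicator E) (indicator E') x) \<le> ennreal (measure lebesgue E)"
      "ennreal (conv (indicator E) (indicator E') x) \<le> ennreal (measure lebesgue E')"
      using order_trans[OF conv_le_h h_le(1)] order_trans[OF conv_le_h h_le(2)] unfolding a b .
    then show ?thesis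
      by simp
  qed
  then show ?thesis
    using \<open>1 \<le> s\<close> conv_indicator_nonneg conv_le_h h h_integral a b
    by (intro Lp_norm_le_interpolation) (auto simp: ennreal_mult)
qed

theorem lemma2p1:
  fixes p q r :: real
  assumes "p > 1" and "q > 1" and "r > 1"
    and "1 / p + 1 / q + 1 / r = 2"
  shows "\<exists>(C::real) \<gamma>. \<gamma> > (0::real) \<and>
    (\<forall>E E' :: 'a::euclidean_space set.
       E \<in> sets lebesgue \<longrightarrow> E' \<in> sets lebesgue \<longrightarrow>
       0 < emeasure lebesgue E \<longrightarrow> emeasure lebesgue E < \<infinity> \<longrightarrow>
       0 < emeasure lebesgue E' \<longrightarrow> emeasure lebesgue E' < \<infinity> \<longrightarrow>
       Lp_norm (r / (r - 1)) (conv (indicator E) (indicator E'))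
         \<le> ennreal (C * (min (measure lebesgue E / measure lebesgue E')
                             (measure lebesgue E' / measure lebesgue E)) powr \<gamma>
                    * measure lebesgue E powr (1 / p) * measure lebesgue E' powr (1 / q)))"
proof -
  define s where "s = r / (r - 1)"
  define \<gamma> where "\<gamma> = min (1 - 1 / p) (1 - 1 / q)"
  have "1 \<le> s"
    using \<open>r > 1\<close> by (simp add: s_def field_simps)
  have exponents: "1 / p + 1 / q = 1 + 1 / s"
    using \<open>r > 1\<close> assms(4) by (simp add: s_def field_simps)
  have "\<gamma> > 0"
    using \<open>p > 1\<close> \<open>q > 1\<close> by (simp add: \<gamma>_def)
  moreover have "Lp_norm s (conv (indicator E) (indicator E'))
      \<le> ennreal (1 * (min (measure lebesgue E / measure lebesgue E')
                             (measure lebesgue E' / measure lebesgue E)) powr \<gamma>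
                    * measure lebesgue E powr (1 / p) * measure lebesgue E' powr (1 / q))"
    if E: "E \<in> sets lebesgue" "0 < emeasure lebesgue E" "emeasure lebesgue E < \<infinity>"
      and E': "E' \<in> sets lebesgue" "0 < emeasure lebesgue E'" "emeasure lebesgue E' < \<infinity>"
    for E E' :: "'a set"
  proof -
    have "0 < measure lebesgue E" "0 < measure lebesgue E'"
      using E E' by (simp_all add: measure_def enn2real_positive_iff)
    then show ?thesis
      using Lp_norm_conv_indicator_le[OF \<open>1 \<le> s\<close> E(1,3) E'(1,3)] exponents
      by (elim order_trans, intro ennreal_leI) (simp add: min_powr_mult_powr_le \<gamma>_def)
  qed
  ultimately show ?thesis
    unfolding s_def by blast
qed

end
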